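(* Let $L_\pi,L_Q,\sigma>0$ and consider the MDP with $\mathcal S=\mathcal A=\mathbb R$, transitions $s'=s+a/L_\pi+\epsilon$ with $\epsilon\sim\mathcal N(0,\sigma^2)$ i.i.d., reward $\mathcal R(s,a)=-L_QL_\pi\,|s+a/L_\pi|$ and discount $\gamma\in(0,1)$. Let $0\le\Delta^\tau<\Delta$ be integers, and let $V_{( * )}$ and $V^\tau_{( * )}$ be the optimal value functions of the $\Delta$-CDMDP and the $\Delta^\tau$-CDMDP of this MDP, respectively. Then for every $x_t\in\mathcal X$, $$I(x_t):=\mathbb E_{x^\tau_t\sim b_\Delta(\cdot|x_t)}\big[V^\tau_{( * )}(x^\tau_t)\big]-V_{( * )}(x_t)=\frac{L_QL_\pi}{1-\gamma}\,\sigma\,\sqrt{\frac{2}{\pi}}\,\big(\sqrt{\Delta}-\sqrt{\Delta^\tau}\big),$$ where $\pi$ here denotes the number $3.14159\ldots$.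
   Context: For an MDP with state space $\mathcal S$, action space $\mathcal A$, transition kernel $\mathcal P$, reward $\mathcal R$ and discount $\gamma$, and a delay $\Delta\in\mathbb N$, the augmented state space is $\mathcal X=\mathcal S\times\mathcal A^\Delta$ with elements $x_t=(s_{t-\Delta},a_{t-\Delta},\dots,a_{t-1})$. The constant delayed MDP (CDMDP) with delay $\Delta$ has transition kernel $\mathcal P_\Delta(\cdot|x_t,a_t)$: the next augmented state is $x_{t+1}=(s_{t-\Delta+1},a_{t-\Delta+1},\dots,a_{t-1},a_t)$ with $s_{t-\Delta+1}\sim\mathcal P(\cdot|s_{t-\Delta},a_{t-\Delta})$; its reward is $\mathcal R_\Delta(x_t,a_t)=\mathbb E_{s_t\sim b(\cdot|x_t)}[\mathcal R(s_t,a_t)]$, where $b(\cdot|x_t)$ is the law of $s_t$ obtained from $s_{t-\Delta}$ by successively sampling $s_{t-\Delta+i+1}\sim\mathcal P(\cdot|s_{t-\Delta+i},a_{t-\Delta+i})$ for $i=0,\dots,\Delta-1$. The optimal value function is the supremum over policies on $\mathcal X$ of the expected infinite-horizon discounted sum of $\mathcal R_\Delta$. For $\Delta^\tau<\Delta$, the $\Delta^\tau$-CDMDP is defined in the same way on $\mathcal X^\tau=\mathcal S\times\mathcal A^{\Delta^\tau}$ (for $\Delta^\tau=0$ it is the original MDP). The delayed belief $b_\Delta(\cdot|x_t)$ is the distribution on $\mathcal X^\tau$ of $x^\tau_t=(s_{t-\Delta^\tau},a_{t-\Delta^\tau},\dots,a_{t-1})$, where the actions are copied from $x_t$ and $s_{t-\Delta^\tau}$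 is obtained from $s_{t-\Delta}$ by successively sampling $s_{t-\Delta+i+1}\sim\mathcal P(\cdot|s_{t-\Delta+i},a_{t-\Delta+i})$ for $i=0,\dots,\Delta-\Delta^\tau-1$. *)

theory Defs
  imports "HOL-Probability.Probability"
begin

type_synonym aug_state = "real \<times> (nat \<Rightarrow> real)"
  (* (s_{t-d}, as) with as i = a_{t-d+i} for i < d, and as i = undefined for i \<ge> d *)

definition base_trans :: "real \<Rightarrow> real \<Rightarrow> real \<Rightarrow> real \<Rightarrow> real measure" where
  "base_trans Lpi sig s a = density lborel (normal_density (s + a / Lpi) sig)"

definition base_reward :: "real \<Rightarrow> real \<Rightarrow> real \<Rightarrow> real \<Rightarrow> real" where
  "base_reward Lpi LQ s a = - (LQ * Lpi * \<bar>s + a / Lpi\<bar>)"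

fun iter_trans :: "real \<Rightarrow> real \<Rightarrow> nat \<Rightarrow> (nat \<Rightarrow> real) \<Rightarrow> real \<Rightarrow> real measure" where
  "iter_trans Lpi sig 0 as s = return borel s"
| "iter_trans Lpi sig (Suc k) as s =
     bind (iter_trans Lpi sig k as s) (\<lambda>s'. base_trans Lpi sig s' (as k))"

definition aug_space :: "nat \<Rightarrow> aug_state measure" where
  "aug_space d = pair_measure (borel :: real measure) (PiM {..<d} (\<lambda>_. (borel :: real measure)))"

definition cd_reward :: "real \<Rightarrow> real \<Rightarrow> real \<Rightarrow> nat \<Rightarrow> aug_state \<Rightarrow> real \<Rightarrow> real" where
  "cd_reward Lpi LQ sig d x a =
     integral\<^sup>L (iter_trans Lpi sig d (snd x) (fst x)) (\<lambda>s. base_reward Lpi LQ s a)"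

definition cd_trans :: "real \<Rightarrow> real \<Rightarrow> nat \<Rightarrow> aug_state \<Rightarrow> real \<Rightarrow> aug_state measure" where
  "cd_trans Lpi sig d x a =
     distr (base_trans Lpi sig (fst x) (if d = 0 then a else snd x 0)) (aug_space d)
       (\<lambda>s'. (s', \<lambda>i. if Suc i < d then snd x (Suc i) else if Suc i = d then a else undefined))"

definition cd_policies :: "nat \<Rightarrow> (aug_state \<Rightarrow> real measure) set" where
  "cd_policies d = {p. p \<in> aug_space d \<rightarrow>\<^sub>M prob_algebra (borel :: real measure)}"

fun cd_marg :: "real \<Rightarrow> real \<Rightarrow> nat \<Rightarrow> (aug_state \<Rightarrow> real measure) \<Rightarrow> aug_state \<Rightarrow> nat \<Rightarrow> aug_state measure" where
  "cd_marg Lpi sig d p x 0 = return (aug_space d) x"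
| "cd_marg Lpi sig d p x (Suc t) =
     bind (cd_marg Lpi sig d p x t) (\<lambda>y. bind (p y) (\<lambda>a. cd_trans Lpi sig d y a))"

text \<open>Value of policy p: expected discounted sum of (non-positive) rewards, sum_t gamma^t E[R_d(x_t,a_t)],
  evaluated as an extended real (rewards are non-positive, so the value lies in [-infinity, 0]).\<close>
definition cd_value :: "real \<Rightarrow> real \<Rightarrow> real \<Rightarrow> real \<Rightarrow> nat \<Rightarrow> (aug_state \<Rightarrow> real measure) \<Rightarrow> aug_state \<Rightarrow> ereal" where
  "cd_value Lpi LQ sig gamma d p x =
     - enn2ereal (\<Sum>t. ennreal (gamma ^ t) *
         (\<integral>\<^sup>+ y. \<integral>\<^sup>+ a. ennreal (- cd_reward Lpi LQ sig d y a) \<partial>(p y) \<partial>(cd_marg Lpi sig d p x t)))"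

definition cd_opt_value :: "real \<Rightarrow> real \<Rightarrow> real \<Rightarrow> real \<Rightarrow> nat \<Rightarrow> aug_state \<Rightarrow> ereal" where
  "cd_opt_value Lpi LQ sig gamma d x = (SUP p \<in> cd_policies d. cd_value Lpi LQ sig gamma d p x)"

definition delayed_belief :: "real \<Rightarrow> real \<Rightarrow> nat \<Rightarrow> nat \<Rightarrow> aug_state \<Rightarrow> aug_state measure" where
  "delayed_belief Lpi sig D dt x =
     distr (iter_trans Lpi sig (D - dt) (snd x) (fst x)) (aug_space dt)
       (\<lambda>s'. (s', \<lambda>i. if i < dt then snd x (i + (D - dt)) else undefined))"

definition exp_nonpos :: "'a measure \<Rightarrow> ('a \<Rightarrow> ereal) \<Rightarrow> ereal" where
  "exp_nonpos M f = - enn2ereal (\<integral>\<^sup>+ y. e2ennreal (- f y) \<partial>M)"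

end

theory Submission
  imports Defs
begin

text \<open>
  The state \<open>s\<^sub>t\<close> seen from an augmented state \<open>x\<close> of the \<open>d\<close>-CDMDP is Gaussian with mean
  \<open>fst x + (\<Sum>i<d. snd x i) / Lpi\<close> and standard deviation \<open>sig * sqrt d\<close>, because the
  transition kernels are translates of one normal law and normal laws are closed under
  convolution. The delayed reward of an action is therefore \<open>-LQ * Lpi * E\<bar>Z + u\<bar>\<close> with
  \<open>Z ~ N(0, sig\<^sup>2 d)\<close> and \<open>u\<close> affine in the action; by symmetry of \<open>Z\<close> this is maximal
  at \<open>u = 0\<close>, where it equals \<open>-LQ * Lpi * sig * sqrt d * sqrt (2 / pi)\<close>. This bound does not
  depend on the state, every policy pays at least it at every step and the (measurable)
  greedy policy pays exactly it, so the optimal value function of the \<open>d\<close>-CDMDP is the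
  constant \<open>-LQ * Lpi * sig * sqrt d * sqrt (2 / pi) / (1 - gamma)\<close>. The theorem is the
  difference of two such constants.
\<close>

section \<open>Gaussian transition laws\<close>

lemma distr_normal_density_translate:
  "distr (density lborel (normal_density m s)) borel ((+) c) = density lborel (normal_density (c + m) s)"
proof -
  have "density lborel (normal_density (c + m) s)
      = density (distr lborel borel ((+) c)) (normal_density (c + m) s)"
    by (simp add: lborel_distr_plus)
  also have "\<dots> = distr (density lborel (\<lambda>x. normal_density (c + m) s (c + x))) borel ((+) c)"
    by (rule density_distr) auto
  also have "(\<lambda>x. ennreal (normal_density (c + m) s (c + x))) = normal_density m s"
    by (simp add: normal_density_def fun_eq_iff)
  finally show ?thesis ..
qed

lemma base_trans_eq_distr:
  "base_trans Lpi sig s a = distr (density lborel (normal_density 0 sig)) borel ((+) (s + a / Lpi))"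
  by (simp add: base_trans_def distr_normal_density_translate)

lemma measurable_base_trans:
  assumes "0 < sig" and [measurable]: "f \<in> M \<rightarrow>\<^sub>M borel" "g \<in> M \<rightarrow>\<^sub>M borel"
  shows "(\<lambda>x. base_trans Lpi sig (f x) (g x)) \<in> M \<rightarrow>\<^sub>M prob_algebra borel"
proof -
  have "density lborel (normal_density 0 sig) \<in> space (prob_algebra borel)"
    using assms by (auto simp: space_prob_algebra prob_space_normal_density)
  then have "(\<lambda>x. distr (density lborel (normal_density 0 sig)) borel ((+) (f x + g x / Lpi)))
      \<in> M \<rightarrow>\<^sub>M prob_algebra borel"
    by measurable
  then show ?thesis by (simp add: base_trans_eq_distr)
qed

lemma bind_translate_eq_convolution:
  fixes M N :: "'a::ordered_euclidean_space measure"
  assumes M: "finite_measure M" "sets M = sets borel"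
    and N: "prob_space N" "sets N = sets borel"
  shows "M \<bind> (\<lambda>x. distr N borel ((+) x)) = (M \<star> N)"
proof (rule measure_eqI)
  have kernel: "(\<lambda>x. distr N borel ((+) x)) \<in> M \<rightarrow>\<^sub>M subprob_algebra borel"
  proof -
    have "N \<in> space (prob_algebra borel)"
      using N by (simp add: space_prob_algebra)
    then have "(\<lambda>x. distr N borel ((+) x)) \<in> borel \<rightarrow>\<^sub>M prob_algebra borel"
      by measurable
    then show ?thesis
      using M(2) by (simp add: measurable_prob_algebraD cong: measurable_cong_sets)
  qed
  have ne: "space M \<noteq> {}"
    using sets_eq_imp_space_eq[OF M(2)] by simp
  show sets: "sets (M \<bind> (\<lambda>x. distr N borel ((+) x))) = sets (M \<star> N)"
    by (simp add: sets_bind[OF _ ne])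
  fix A assume "A \<in> sets (M \<bind> (\<lambda>x. distr N borel ((+) x)))"
  then have [measurable]: "A \<in> sets borel" by (simp add: sets)
  have "emeasure (M \<bind> (\<lambda>x. distr N borel ((+) x))) A = \<integral>\<^sup>+x. emeasure (distr N borel ((+) x)) A \<partial>M"
    by (rule emeasure_bind[OF ne kernel]) simp
  also have "\<dots> = \<integral>\<^sup>+x. \<integral>\<^sup>+y. indicator A (x + y) \<partial>N \<partial>M"
  proof (intro nn_integral_cong)
    fix x
    have "emeasure (distr N borel ((+) x)) A = \<integral>\<^sup>+y. indicator A y \<partial>distr N borel ((+) x)"
      by simp
    also have "\<dots> = \<integral>\<^sup>+y. indicator A (x + y) \<partial>N"
      using N(2) by (intro nn_integral_distr) (auto cong: measurable_cong_sets)
    finally show "emeasure (distr N borel ((+) x)) A = \<integral>\<^sup>+y. indicator A (x + y) \<partial>N" .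
  qed
  also have "\<dots> = emeasure (M \<star> N) A"
    using M N by (simp add: convolution_emeasure' prob_space.finite_measure)
  finally show "emeasure (M \<bind> (\<lambda>x. distr N borel ((+) x))) A = emeasure (M \<star> N) A" .
qed

lemma convolution_normal_density:
  assumes "0 < t" "0 < s"
  shows "(density lborel (normal_density m t) \<star> density lborel (normal_density c s))
       = density lborel (normal_density (m + c) (sqrt (t\<^sup>2 + s\<^sup>2)))"
proof -
  have "(\<integral>\<^sup>+y. ennreal (normal_density m t (x - y)) * ennreal (normal_density c s y) \<partial>lborel)
      = ennreal (normal_density (m + c) (sqrt (t\<^sup>2 + s\<^sup>2)) x)" for x
  proof -
    have "(\<integral>\<^sup>+y. ennreal (normal_density m t (x - y)) * ennreal (normal_density c s y) \<partial>lborel)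
        = (\<integral>\<^sup>+y. ennreal (normal_density m t (x - (c + 1 * y)) * normal_density c s (c + 1 * y)) \<partial>lborel)"
      using nn_integral_real_affine[of "\<lambda>y. ennreal (normal_density m t (x - y) * normal_density c s y)" 1 c]
      by (simp add: ennreal_mult')
    also have "\<dots> = (\<integral>\<^sup>+y. ennreal (normal_density 0 t ((x - m - c) - y) * normal_density 0 s y) \<partial>lborel)"
      by (intro nn_integral_cong) (simp add: normal_density_def algebra_simps)
    also have "\<dots> = ennreal (normal_density (m + c) (sqrt (t\<^sup>2 + s\<^sup>2)) x)"
      using fun_cong[OF conv_normal_density_zero_mean[OF assms], of "x - m - c"]
      by (simp add: normal_density_def algebra_simps)
    finally show ?thesis .
  qed
  then show ?thesis
    using assms by (subst convolution_density) (auto intro!: prob_space.finite_measure prob_space_normal_density)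
qed

lemma bind_normal_density_base_trans:
  assumes "0 < sig" "0 < t"
  shows "density lborel (normal_density m t) \<bind> (\<lambda>s. base_trans Lpi sig s a)
       = density lborel (normal_density (m + a / Lpi) (sqrt (t\<^sup>2 + sig\<^sup>2)))"
proof -
  have "base_trans Lpi sig s a = distr (density lborel (normal_density (a / Lpi) sig)) borel ((+) s)" for s
    by (simp add: base_trans_def distr_normal_density_translate)
  then have "density lborel (normal_density m t) \<bind> (\<lambda>s. base_trans Lpi sig s a)
      = (density lborel (normal_density m t) \<star> density lborel (normal_density (a / Lpi) sig))"
    using assms by (simp add: bind_translate_eq_convolution prob_space_normal_density
        prob_space.finite_measure)
  then show ?thesis
    using assms by (simp add: convolution_normal_density)
qed

lemma iter_trans_eq_normal_density:
  assumes "0 < sig" "0 < k"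
  shows "iter_trans Lpi sig k as s
       = density lborel (normal_density (s + (\<Sum>i<k. as i) / Lpi) (sig * sqrt (real k)))"
  using assms(2)
proof (induction k rule: nat_induct_non_zero)
  case 1
  have "(\<lambda>s'. base_trans Lpi sig s' (as 0)) \<in> borel \<rightarrow>\<^sub>M subprob_algebra borel"
    by (intro measurable_prob_algebraD measurable_base_trans[OF assms(1)]) auto
  then show ?case by (simp add: bind_return base_trans_def)
next
  case (Suc k)
  have "(sig * sqrt (real k))\<^sup>2 + sig\<^sup>2 = (sig * sqrt (real (Suc k)))\<^sup>2"
    by (simp add: power_mult_distrib algebra_simps)
  then show ?case
    using Suc assms by (simp add: bind_normal_density_base_trans add_divide_distrib add.assoc)
qed

section \<open>Mean absolute value of a shifted Gaussian\<close>

definition normal_mean_abs :: "real \<Rightarrow> real \<Rightarrow> real" where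
  "normal_mean_abs v u = (\<integral>t. normal_density 0 v t * \<bar>t + u\<bar> \<partial>lborel)"

lemma integrable_normal_density_mult_abs:
  assumes "0 < v"
  shows "integrable lborel (\<lambda>t. normal_density m v t * \<bar>t + u\<bar>)"
proof (rule Bochner_Integration.integrable_bound)
  show "integrable lborel (\<lambda>t. normal_density m v t * \<bar>t - m\<bar> ^ 1 + \<bar>m + u\<bar> * normal_density m v t)"
    using assms by (intro Bochner_Integration.integrable_add integrable_normal_moment_abs
        Bochner_Integration.integrable_mult_right integrable_normal_density) auto
  have "normal_density m v t * \<bar>t + u\<bar> \<le> normal_density m v t * (\<bar>t - m\<bar> + \<bar>m + u\<bar>)" for t
    by (intro mult_left_mono) auto
  then show "AE t in lborel. norm (normal_density m v t * \<bar>t + u\<bar>)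
      \<le> norm (normal_density m v t * \<bar>t - m\<bar> ^ 1 + \<bar>m + u\<bar> * normal_density m v t)"
    by (intro AE_I2) (simp add: abs_mult algebra_simps)
qed simp

lemma integral_normal_density_mult_abs:
  "(\<integral>t. normal_density m v t * \<bar>t + w\<bar> \<partial>lborel) = normal_mean_abs v (m + w)"
proof -
  have "(\<integral>t. normal_density m v t * \<bar>t + w\<bar> \<partial>lborel)
      = \<bar>1\<bar> *\<^sub>R (\<integral>t. normal_density m v (m + 1 * t) * \<bar>(m + 1 * t) + w\<bar> \<partial>lborel)"
    by (rule lborel_integral_real_affine) simp
  then show ?thesis
    by (simp add: normal_mean_abs_def normal_density_def algebra_simps)
qed

lemma normal_mean_abs_minus: "normal_mean_abs v (- u) = normal_mean_abs v u"
proof -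
  have "normal_mean_abs v u
      = \<bar>-1\<bar> *\<^sub>R (\<integral>t. normal_density 0 v (0 + -1 * t) * \<bar>(0 + -1 * t) + u\<bar> \<partial>lborel)"
    unfolding normal_mean_abs_def by (rule lborel_integral_real_affine) simp
  also have "\<dots> = normal_mean_abs v (- u)"
    unfolding normal_mean_abs_def
    by (simp add: normal_density_def abs_minus_commute algebra_simps)
  finally show ?thesis ..
qed

lemma normal_mean_abs_0:
  assumes "0 < v"
  shows "normal_mean_abs v 0 = v * sqrt (2 / pi)"
  using integral_normal_moment_abs_odd[OF assms, of 0 0] by (simp add: normal_mean_abs_def)

text \<open>Averaging \<open>\<bar>t + u\<bar> + \<bar>t - u\<bar> \<ge> 2 \<bar>t\<bar>\<close> over the symmetric law shows that \<open>u = 0\<close> is optimal.\<close>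

lemma normal_mean_abs_ge:
  assumes "0 < v"
  shows "v * sqrt (2 / pi) \<le> normal_mean_abs v u"
proof -
  note integrable = integrable_normal_density_mult_abs[OF assms, of 0]
  have "2 * normal_mean_abs v 0
      \<le> (\<integral>t. normal_density 0 v t * \<bar>t + u\<bar> + normal_density 0 v t * \<bar>t + - u\<bar> \<partial>lborel)"
    unfolding normal_mean_abs_def integral_mult_right_zero[symmetric]
  proof (rule integral_mono)
    fix t
    have "normal_density 0 v t * (2 * \<bar>t\<bar>) \<le> normal_density 0 v t * (\<bar>t + u\<bar> + \<bar>t + - u\<bar>)"
      by (intro mult_left_mono) auto
    then show "2 * (normal_density 0 v t * \<bar>t + 0\<bar>)
        \<le> normal_density 0 v t * \<bar>t + u\<bar> + normal_density 0 v t * \<bar>t + - u\<bar>"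
      by (simp add: algebra_simps)
  qed (use integrable[of 0] integrable[of u] integrable[of "- u"] in auto)
  also have "\<dots> = normal_mean_abs v u + normal_mean_abs v (- u)"
    unfolding normal_mean_abs_def
    by (intro Bochner_Integration.integral_add integrable)
  finally show ?thesis
    using assms by (simp add: normal_mean_abs_0 normal_mean_abs_minus)
qed

definition cd_min_cost :: "real \<Rightarrow> real \<Rightarrow> real \<Rightarrow> nat \<Rightarrow> real" where
  "cd_min_cost Lpi LQ sig d = LQ * Lpi * (sig * sqrt (real d) * sqrt (2 / pi))"

text \<open>The greedy action makes the predicted mean of \<open>s\<^sub>t + a / Lpi\<close> vanish.\<close>

definition greedy_action :: "real \<Rightarrow> nat \<Rightarrow> aug_state \<Rightarrow> real" where
  "greedy_action Lpi d y = - Lpi * fst y - (\<Sum>i<d. snd y i)"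

lemma cd_reward_eq_normal_mean_abs:
  assumes "0 < sig" "0 < d"
  shows "cd_reward Lpi LQ sig d y a
       = - LQ * Lpi * normal_mean_abs (sig * sqrt (real d)) (fst y + (\<Sum>i<d. snd y i) / Lpi + a / Lpi)"
proof -
  let ?m = "fst y + (\<Sum>i<d. snd y i) / Lpi" and ?v = "sig * sqrt (real d)"
  have "cd_reward Lpi LQ sig d y a = (\<integral>s. normal_density ?m ?v s * base_reward Lpi LQ s a \<partial>lborel)"
    unfolding cd_reward_def iter_trans_eq_normal_density[OF assms]
    by (subst integral_density) (auto simp: base_reward_def)
  also have "\<dots> = - LQ * Lpi * (\<integral>s. normal_density ?m ?v s * \<bar>s + a / Lpi\<bar> \<partial>lborel)"
    by (simp add: base_reward_def mult.left_commute[of "normal_density _ _ _"])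
  finally show ?thesis
    by (simp add: integral_normal_density_mult_abs add.assoc)
qed

lemma cd_min_cost_le_cd_reward:
  assumes "0 < Lpi" "0 < LQ" "0 < sig"
  shows "cd_min_cost Lpi LQ sig d \<le> - cd_reward Lpi LQ sig d y a"
proof (cases "d = 0")
  case True
  then show ?thesis
    using assms by (simp add: cd_min_cost_def cd_reward_def base_reward_def integral_return)
next
  case False
  then show ?thesis
    using assms normal_mean_abs_ge[of "sig * sqrt (real d)"]
    by (simp add: cd_reward_eq_normal_mean_abs cd_min_cost_def mult.assoc)
qed

lemma cd_reward_greedy_action:
  assumes "0 < Lpi" "0 < sig"
  shows "- cd_reward Lpi LQ sig d y (greedy_action Lpi d y) = cd_min_cost Lpi LQ sig d"
proof (cases "d = 0")
  case True
  then show ?thesis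
    using assms by (simp add: cd_min_cost_def cd_reward_def base_reward_def integral_return greedy_action_def)
next
  case False
  have "fst y + (\<Sum>i<d. snd y i) / Lpi + greedy_action Lpi d y / Lpi = 0"
    using assms by (simp add: greedy_action_def field_simps)
  then show ?thesis
    using assms False by (simp add: cd_reward_eq_normal_mean_abs normal_mean_abs_0 cd_min_cost_def)
qed

section \<open>Measurability of the dynamics\<close>

definition push_action :: "nat \<Rightarrow> (nat \<Rightarrow> real) \<Rightarrow> real \<Rightarrow> nat \<Rightarrow> real" where
  "push_action d as a = (\<lambda>i. if Suc i < d then as (Suc i) else if Suc i = d then a else undefined)"

lemma cd_trans_eq_push_action:
  "cd_trans Lpi sig d y a = distr (base_trans Lpi sig (fst y) (if d = 0 then a else snd y 0))
     (aug_space d) (\<lambda>s. (s, push_action d (snd y) a))"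
  by (simp add: cd_trans_def push_action_def)

lemma measurable_push_action:
  "(\<lambda>(as, a). push_action d as a)
     \<in> PiM {..<d} (\<lambda>_. borel) \<Otimes>\<^sub>M borel \<rightarrow>\<^sub>M PiM {..<d} (\<lambda>_. (borel :: real measure))"
proof (rule measurable_PiM_single')
  fix i assume i: "i \<in> {..<d}"
  show "(\<lambda>z. (case z of (as, a) \<Rightarrow> push_action d as a) i)
      \<in> PiM {..<d} (\<lambda>_. borel) \<Otimes>\<^sub>M borel \<rightarrow>\<^sub>M borel"
  proof (cases "Suc i < d")
    case True
    then show ?thesis by (simp add: push_action_def case_prod_beta) measurable
  next
    case False
    with i show ?thesis by (simp add: push_action_def case_prod_beta)
  qed
qed (auto simp: push_action_def PiE_def extensional_def)

lemma measurable_cd_trans: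
  assumes "0 < sig"
  shows "(\<lambda>(y, a). cd_trans Lpi sig d y a) \<in> aug_space d \<Otimes>\<^sub>M borel \<rightarrow>\<^sub>M prob_algebra (aug_space d)"
proof -
  have "(\<lambda>z. if d = 0 then snd z else snd (fst z) 0) \<in> aug_space d \<Otimes>\<^sub>M borel \<rightarrow>\<^sub>M borel"
    by (cases "d = 0") (simp_all add: aug_space_def, measurable)
  then have "(\<lambda>z. base_trans Lpi sig (fst (fst z)) (if d = 0 then snd z else snd (fst z) 0))
      \<in> aug_space d \<Otimes>\<^sub>M borel \<rightarrow>\<^sub>M prob_algebra borel"
    by (intro measurable_base_trans[OF assms]) (auto simp: aug_space_def)
  moreover have "(\<lambda>(z, s). (s, push_action d (snd (fst z)) (snd z)))
      \<in> (aug_space d \<Otimes>\<^sub>M borel) \<Otimes>\<^sub>M borel \<rightarrow>\<^sub>M aug_space d"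
    using measurable_push_action[of d] unfolding aug_space_def by measurable
  ultimately show ?thesis
    by (simp add: cd_trans_eq_push_action case_prod_beta measurable_distr_prob_space2)
qed

lemma prob_space_cd_policy:
  assumes "p \<in> cd_policies d" "y \<in> space (aug_space d)"
  shows "prob_space (p y)"
  using measurable_space[of p "aug_space d" "prob_algebra borel" y] assms
  by (auto simp: cd_policies_def space_prob_algebra)

lemma cd_marg_in_prob_algebra:
  assumes "0 < sig" "p \<in> cd_policies d" "x \<in> space (aug_space d)"
  shows "cd_marg Lpi sig d p x t \<in> space (prob_algebra (aug_space d))"
proof (induction t)
  case 0
  show ?case using measurable_space[OF measurable_return_prob_space assms(3)] by simp
next
  case (Suc t)
  have "p \<in> aug_space d \<rightarrow>\<^sub>M prob_algebra borel"
    using assms(2) by (simp add: cd_policies_def)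
  then have K: "(\<lambda>y. p y \<bind> cd_trans Lpi sig d y) \<in> aug_space d \<rightarrow>\<^sub>M prob_algebra (aug_space d)"
    by (rule measurable_bind_prob_space2) (use measurable_cd_trans[OF assms(1)] in simp)
  show ?case
    using measurable_space[OF measurable_bind_prob_space[OF measurable_const[OF Suc.IH, of "count_space UNIV"] K], of "()"]
    by simp
qed

section \<open>Optimal values\<close>

lemma (in prob_space) nn_integral_ge_const:
  assumes "\<And>x. x \<in> space M \<Longrightarrow> c \<le> f x"
  shows "c \<le> (\<integral>\<^sup>+x. f x \<partial>M)"
proof -
  have "c = (\<integral>\<^sup>+x. c \<partial>M)"
    by (simp add: emeasure_space_1)
  also have "\<dots> \<le> (\<integral>\<^sup>+x. f x \<partial>M)"
    using assms by (rule nn_integral_mono)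
  finally show ?thesis .
qed

lemma suminf_geometric_ennreal:
  fixes gamma :: real
  assumes "0 \<le> gamma" "gamma < 1" "0 \<le> K"
  shows "(\<Sum>t. ennreal (gamma ^ t) * ennreal K) = ennreal (K / (1 - gamma))"
proof -
  have "(\<Sum>t. gamma ^ t * K) = (\<Sum>t. gamma ^ t) * K"
    using assms by (intro suminf_mult2[symmetric] summable_geometric) simp
  also have "\<dots> = K / (1 - gamma)"
    using assms by (simp add: suminf_geometric)
  finally have "(\<Sum>t. ennreal (gamma ^ t * K)) = ennreal (K / (1 - gamma))"
    using assms by (subst suminf_ennreal2) (auto intro!: summable_mult2 summable_geometric)
  then show ?thesis
    using assms by (simp add: ennreal_mult)
qed

lemma cd_min_cost_le_expected_cost:
  assumes pos: "0 < Lpi" "0 < LQ" "0 < sig" and p: "p \<in> cd_policies d"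
    and x: "x \<in> space (aug_space d)"
  shows "ennreal (cd_min_cost Lpi LQ sig d)
    \<le> (\<integral>\<^sup>+y. \<integral>\<^sup>+a. ennreal (- cd_reward Lpi LQ sig d y a) \<partial>p y \<partial>cd_marg Lpi sig d p x t)"
proof -
  have marg: "cd_marg Lpi sig d p x t \<in> space (prob_algebra (aug_space d))"
    by (rule cd_marg_in_prob_algebra[OF pos(3) p x])
  then interpret prob_space "cd_marg Lpi sig d p x t"
    by (simp add: space_prob_algebra)
  have space_marg: "space (cd_marg Lpi sig d p x t) = space (aug_space d)"
    using marg by (intro sets_eq_imp_space_eq) (simp add: space_prob_algebra)
  show ?thesis
  proof (rule nn_integral_ge_const)
    fix y assume "y \<in> space (cd_marg Lpi sig d p x t)"
    then have "y \<in> space (aug_space d)"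
      by (simp add: space_marg)
    then interpret policy: prob_space "p y"
      by (rule prob_space_cd_policy[OF p])
    show "ennreal (cd_min_cost Lpi LQ sig d) \<le> (\<integral>\<^sup>+a. ennreal (- cd_reward Lpi LQ sig d y a) \<partial>p y)"
      by (rule policy.nn_integral_ge_const) (simp add: ennreal_leI cd_min_cost_le_cd_reward[OF pos])
  qed
qed

definition greedy_policy :: "real \<Rightarrow> nat \<Rightarrow> aug_state \<Rightarrow> real measure" where
  "greedy_policy Lpi d = (\<lambda>y. return borel (greedy_action Lpi d y))"

lemma greedy_policy_in_cd_policies: "greedy_policy Lpi d \<in> cd_policies d"
proof -
  have "(\<lambda>y. \<Sum>i<d. snd y i) \<in> aug_space d \<rightarrow>\<^sub>M borel"
    unfolding aug_space_def by measurable
  then have "greedy_action Lpi d \<in> aug_space d \<rightarrow>\<^sub>M borel"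
    unfolding greedy_action_def aug_space_def by measurable
  from measurable_comp[OF this measurable_return_prob_space] show ?thesis
    by (simp add: cd_policies_def greedy_policy_def comp_def)
qed

lemma expected_cost_greedy_policy:
  assumes pos: "0 < Lpi" "0 < sig" and x: "x \<in> space (aug_space d)"
  shows "(\<integral>\<^sup>+y. \<integral>\<^sup>+a. ennreal (- cd_reward Lpi LQ sig d y a) \<partial>greedy_policy Lpi d y
            \<partial>cd_marg Lpi sig d (greedy_policy Lpi d) x t)
       = ennreal (cd_min_cost Lpi LQ sig d)"
proof -
  have "(\<integral>\<^sup>+a. ennreal (- cd_reward Lpi LQ sig d y a) \<partial>greedy_policy Lpi d y)
      = ennreal (cd_min_cost Lpi LQ sig d)" for y
  proof -
    have "AE a in greedy_policy Lpi d y. a = greedy_action Lpi d y"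
      unfolding greedy_policy_def by (subst AE_return) auto
    then have "(\<integral>\<^sup>+a. ennreal (- cd_reward Lpi LQ sig d y a) \<partial>greedy_policy Lpi d y)
        = (\<integral>\<^sup>+a. ennreal (cd_min_cost Lpi LQ sig d) \<partial>greedy_policy Lpi d y)"
      by (intro nn_integral_cong_AE) (auto simp: cd_reward_greedy_action[OF pos])
    then show ?thesis
      by (simp add: greedy_policy_def)
  qed
  moreover have "prob_space (cd_marg Lpi sig d (greedy_policy Lpi d) x t)"
    using cd_marg_in_prob_algebra[OF pos(2) greedy_policy_in_cd_policies x]
    by (simp add: space_prob_algebra)
  ultimately show ?thesis
    by (simp add: prob_space.emeasure_space_1)
qed

lemma cd_opt_value_eq:
  assumes pos: "0 < Lpi" "0 < LQ" "0 < sig" "0 < gamma" "gamma < 1"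
    and x: "x \<in> space (aug_space d)"
  shows "cd_opt_value Lpi LQ sig gamma d x = - ereal (cd_min_cost Lpi LQ sig d / (1 - gamma))"
proof -
  let ?C = "cd_min_cost Lpi LQ sig d"
  have C: "0 \<le> ?C" "0 \<le> ?C / (1 - gamma)"
    using pos by (simp_all add: cd_min_cost_def)
  note geometric = suminf_geometric_ennreal[OF less_imp_le[OF pos(4)] pos(5) C(1)]
  have le: "cd_value Lpi LQ sig gamma d p x \<le> - ereal (?C / (1 - gamma))" if p: "p \<in> cd_policies d" for p
  proof -
    have "ennreal (?C / (1 - gamma)) \<le> (\<Sum>t. ennreal (gamma ^ t) *
        (\<integral>\<^sup>+y. \<integral>\<^sup>+a. ennreal (- cd_reward Lpi LQ sig d y a) \<partial>p y \<partial>cd_marg Lpi sig d p x t))"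
      unfolding geometric[symmetric]
      by (intro suminf_le mult_left_mono cd_min_cost_le_expected_cost[OF pos(1-3) p x]) auto
    then have "enn2ereal (ennreal (?C / (1 - gamma))) \<le> enn2ereal (\<Sum>t. ennreal (gamma ^ t) *
        (\<integral>\<^sup>+y. \<integral>\<^sup>+a. ennreal (- cd_reward Lpi LQ sig d y a) \<partial>p y \<partial>cd_marg Lpi sig d p x t))"
      by (simp only: less_eq_ennreal.rep_eq)
    then have "ereal (?C / (1 - gamma)) \<le> enn2ereal (\<Sum>t. ennreal (gamma ^ t) *
        (\<integral>\<^sup>+y. \<integral>\<^sup>+a. ennreal (- cd_reward Lpi LQ sig d y a) \<partial>p y \<partial>cd_marg Lpi sig d p x t))"
      using C(2) by simp
    then show ?thesis
      unfolding cd_value_def by (simp only: ereal_minus_le_minus)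
  qed
  have greedy: "cd_value Lpi LQ sig gamma d (greedy_policy Lpi d) x = - ereal (?C / (1 - gamma))"
    unfolding cd_value_def expected_cost_greedy_policy[OF pos(1,3) x] geometric
    using C(2) by simp
  show ?thesis
    unfolding cd_opt_value_def
  proof (rule antisym)
    show "(SUP p\<in>cd_policies d. cd_value Lpi LQ sig gamma d p x) \<le> - ereal (?C / (1 - gamma))"
      by (rule SUP_least) (rule le)
    show "- ereal (?C / (1 - gamma)) \<le> (SUP p\<in>cd_policies d. cd_value Lpi LQ sig gamma d p x)"
      unfolding greedy[symmetric] by (rule SUP_upper[OF greedy_policy_in_cd_policies])
  qed
qed

lemma prob_space_delayed_belief:
  assumes "0 < sig" "Dt < D"
  shows "prob_space (delayed_belief Lpi sig D Dt x)"
proof -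
  let ?M = "iter_trans Lpi sig (D - Dt) (snd x) (fst x)"
  have M: "?M = density lborel (normal_density (fst x + (\<Sum>i<D - Dt. snd x i) / Lpi) (sig * sqrt (real (D - Dt))))"
    using assms by (simp add: iter_trans_eq_normal_density)
  have "(\<lambda>i. if i < Dt then snd x (i + (D - Dt)) else undefined) \<in> space (PiM {..<Dt} (\<lambda>_. (borel :: real measure)))"
    by (auto simp: space_PiM PiE_def extensional_def)
  then have "(\<lambda>s. (s, \<lambda>i. if i < Dt then snd x (i + (D - Dt)) else undefined)) \<in> ?M \<rightarrow>\<^sub>M aug_space Dt"
    unfolding M aug_space_def by measurable
  moreover have "prob_space ?M"
    using assms by (simp add: M prob_space_normal_density)
  ultimately show ?thesis
    unfolding delayed_belief_def by (intro prob_space.prob_space_distr)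
qed

lemma exp_nonpos_const:
  assumes "prob_space M" "0 \<le> c" "\<And>y. y \<in> space M \<Longrightarrow> f y = - ereal c"
  shows "exp_nonpos M f = - ereal c"
proof -
  have "(\<integral>\<^sup>+y. e2ennreal (- f y) \<partial>M) = (\<integral>\<^sup>+y. ennreal c \<partial>M)"
    using assms(2,3) by (intro nn_integral_cong) (simp add: e2ennreal_ereal)
  also have "\<dots> = ennreal c"
    using assms(1) by (simp add: prob_space.emeasure_space_1)
  finally show ?thesis
    using assms(2) by (simp add: exp_nonpos_def)
qed

theorem mainTheorem9:
  fixes Lpi LQ sig gamma :: real and D Dt :: nat and x :: aug_state
  assumes "Lpi > 0" and "LQ > 0" and "sig > 0"
    and "0 < gamma" and "gamma < 1"
    and "Dt < D"
    and "x \<in> space (aug_space D)"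
  shows "exp_nonpos (delayed_belief Lpi sig D Dt x) (cd_opt_value Lpi LQ sig gamma Dt)
           - cd_opt_value Lpi LQ sig gamma D x
         = ereal (LQ * Lpi / (1 - gamma) * sig * sqrt (2 / pi) * (sqrt (real D) - sqrt (real Dt)))"
proof -
  note pos = assms(1-5)
  have "exp_nonpos (delayed_belief Lpi sig D Dt x) (cd_opt_value Lpi LQ sig gamma Dt)
      = - ereal (cd_min_cost Lpi LQ sig Dt / (1 - gamma))"
    using pos assms(6)
    by (intro exp_nonpos_const prob_space_delayed_belief)
      (simp_all add: cd_min_cost_def cd_opt_value_eq delayed_belief_def)
  moreover have "cd_opt_value Lpi LQ sig gamma D x = - ereal (cd_min_cost Lpi LQ sig D / (1 - gamma))"
    using pos assms(7) by (rule cd_opt_value_eq)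
  ultimately show ?thesis
    by (simp add: cd_min_cost_def diff_divide_distrib[symmetric] algebra_simps)
qed

end
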